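(* For every integer $n\ge 2$ there exists a double-$n$ string with diameter at most $5\lceil n/13\rceil-1$. Consequently $\delta(n)\le 5\lceil n/13\rceil -1$ for all $n\ge 2$, and $\limsup_{n\to\infty}\delta(n)/n\le 5/13$.
   Context: A double-$n$ string is a string of length $2n$ over an alphabet of $n$ symbols in which each symbol appears exactly twice. Positions in the string are numbered $1,\dots,2n$. The distance between two distinct symbols is the minimum, over an occurrence of the first symbol and an occurrence of the second, of the absolute difference of their positions. The diameter of a double-$n$ string ($n\ge 2$) is the maximum of the distance over all pairs of distinct symbols. $\delta(n)$ denotes the minimum diameter over all double-$n$ strings. *)

theory Defs
  imports Complex_Main "HOL-Library.Liminf_Limsup" "HOL-Library.Extended_Real"
begin

text \<open>A string is a list; the paper's position p (1-based) is list index p-1.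
  The alphabet of n symbols is {0..<n}.\<close>

definition double_string :: "nat \<Rightarrow> nat list \<Rightarrow> bool" where
  "double_string n xs \<longleftrightarrow> length xs = 2 * n \<and> set xs \<subseteq> {..<n} \<and>
     (\<forall>a<n. card {i. i < length xs \<and> xs ! i = a} = 2)"

definition sym_dist :: "nat list \<Rightarrow> nat \<Rightarrow> nat \<Rightarrow> nat" where
  "sym_dist xs a b = Min {nat \<bar>int i - int j\<bar> | i j.
      i < length xs \<and> j < length xs \<and> xs ! i = a \<and> xs ! j = b}"

definition diameter :: "nat \<Rightarrow> nat list \<Rightarrow> nat" where
  "diameter n xs = Max {sym_dist xs a b | a b. a < n \<and> b < n \<and> a \<noteq> b}"

definition delta :: "nat \<Rightarrow> nat" where
  "delta n = Min {diameter n xs | xs. double_string n xs}"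

end

theory Submission
  imports Defs
begin

text \<open>Start from a double-13 string of diameter 4 and replace each symbol s by a block of k
  symbols s, s + 13, ..., s + 13 (k - 1). Two symbols of the resulting double-13k string lie in
  blocks coming from positions at distance at most 4 (or in one block), so their distance is at most
  4k + (k - 1) = 5k - 1. For n \<le> 13k, deleting all symbols \<ge> n leaves a double-n string,
  and deletion never increases distances. Taking k = \<lceil>n/13\<rceil> gives the bound, and
  dividing by n the limsup.\<close>

lemma nat_abs_diff_le_iff: "nat \<bar>int i - int j\<bar> \<le> d \<longleftrightarrow> i \<le> j + d \<and> j \<le> i + d"
  by linarith

lemma card_nth_eq_count_list: "card {i. i < length xs \<and> xs ! i = a} = count_list xs a"
  by (simp add: count_list_eq_length_filter length_filter_conv_card eq_commute)

lemma double_stringI: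
  assumes "set xs \<subseteq> {..<n}" and "\<And>a. a < n \<Longrightarrow> count_list xs a = 2"
  shows "double_string n xs"
proof -
  have "length xs = (\<Sum>a<n. count_list xs a)"
    using sum_count_set[OF assms(1)] by simp
  also have "\<dots> = 2 * n" using assms(2) by simp
  finally show ?thesis
    unfolding double_string_def card_nth_eq_count_list using assms by simp
qed

lemma double_string_count:
  assumes "double_string n xs" "a < n"
  shows "count_list xs a = 2"
  using assms by (simp add: double_string_def card_nth_eq_count_list)

lemma double_string_symbol_less: "double_string m xs \<Longrightarrow> p < length xs \<Longrightarrow> xs ! p < m"
  unfolding double_string_def using nth_mem by blast

lemma double_string_occurs:
  assumes "double_string n xs" "a < n"
  obtains i where "i < length xs" "xs ! i = a"
proof -
  have "a \<in> set xs" using double_string_count[OF assms] by (metis count_list_0_iff zero_neq_numeral)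
  then show ?thesis using that by (metis in_set_conv_nth)
qed

lemma finite_sym_dist_set:
  "finite {nat \<bar>int i - int j\<bar> | i j. i < length xs \<and> j < length xs \<and> xs ! i = a \<and> xs ! j = b}"
  by (rule finite_subset[of _ "(\<lambda>(i,j). nat \<bar>int i - int j\<bar>) ` ({..<length xs} \<times> {..<length xs})"]) auto

lemma sym_dist_le:
  assumes "i < length xs" "j < length xs" "xs ! i = a" "xs ! j = b"
  shows "sym_dist xs a b \<le> nat \<bar>int i - int j\<bar>"
  unfolding sym_dist_def by (rule Min_le[OF finite_sym_dist_set]) (use assms in blast)

lemma sym_dist_attained:
  assumes "i < length xs" "j < length xs" "xs ! i = a" "xs ! j = b"
  obtains i' j' where "i' < length xs" "j' < length xs" "xs ! i' = a" "xs ! j' = b"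
    "sym_dist xs a b = nat \<bar>int i' - int j'\<bar>"
proof -
  have "sym_dist xs a b \<in> {nat \<bar>int i - int j\<bar> | i j. i < length xs \<and> j < length xs \<and> xs ! i = a \<and> xs ! j = b}"
    unfolding sym_dist_def by (rule Min_in[OF finite_sym_dist_set]) (use assms in blast)
  then show ?thesis using that by blast
qed

lemma finite_sym_dists: "finite {sym_dist xs a b | a b. a < n \<and> b < n \<and> a \<noteq> b}"
  by (rule finite_subset[of _ "(\<lambda>(a,b). sym_dist xs a b) ` ({..<n} \<times> {..<n})"]) auto

lemma sym_dist_le_diameter:
  "a < n \<Longrightarrow> b < n \<Longrightarrow> a \<noteq> b \<Longrightarrow> sym_dist xs a b \<le> diameter n xs"
  unfolding diameter_def by (rule Max_ge[OF finite_sym_dists]) blast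

lemma diameter_le:
  assumes "2 \<le> n" and "\<And>a b. a < n \<Longrightarrow> b < n \<Longrightarrow> a \<noteq> b \<Longrightarrow> sym_dist xs a b \<le> d"
  shows "diameter n xs \<le> d"
proof -
  have "sym_dist xs 0 1 \<in> {sym_dist xs a b | a b. a < n \<and> b < n \<and> a \<noteq> b}"
    using assms(1) by fastforce
  then show ?thesis
    unfolding diameter_def using assms(2) by (subst Max_le_iff[OF finite_sym_dists]) blast+
qed

lemma delta_le_diameter:
  assumes "double_string n xs"
  shows "delta n \<le> diameter n xs"
proof -
  have "finite {diameter n xs | xs. double_string n xs}"
    by (rule finite_subset[of _ "diameter n ` {xs. set xs \<subseteq> {..<n} \<and> length xs = 2 * n}"])
      (auto simp: double_string_def intro!: finite_lists_length_eq)
  then show ?thesis unfolding delta_def by (rule Min_le) (use assms in blast)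
qed

lemma nth_filter_length_take:
  assumes "i < length xs" "P (xs ! i)"
  shows "length (filter P (take i xs)) < length (filter P xs)"
    and "filter P xs ! length (filter P (take i xs)) = xs ! i"
proof -
  have "xs = take i xs @ xs ! i # drop (Suc i) xs" using assms(1) by (simp add: Cons_nth_drop_Suc)
  then have "filter P xs = filter P (take i xs) @ xs ! i # filter P (drop (Suc i) xs)"
    using assms(2) by (metis filter.simps(2) filter_append)
  then show "length (filter P (take i xs)) < length (filter P xs)"
    and "filter P xs ! length (filter P (take i xs)) = xs ! i" by (simp_all add: nth_append)
qed

lemma length_filter_take_mono:
  assumes "i \<le> j"
  shows "length (filter P (take i xs)) \<le> length (filter P (take j xs))"
    and "length (filter P (take j xs)) \<le> length (filter P (take i xs)) + (j - i)"
proof -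
  have "take j xs = take i xs @ take (j - i) (drop i xs)"
    using assms take_add[of i "j - i" xs] by simp
  then have "length (filter P (take j xs)) =
      length (filter P (take i xs)) + length (filter P (take (j - i) (drop i xs)))"
    by simp
  moreover have "length (filter P (take (j - i) (drop i xs))) \<le> j - i"
    by (metis length_filter_le length_take min.bounded_iff order_refl dual_order.trans)
  ultimately show "length (filter P (take i xs)) \<le> length (filter P (take j xs))"
    and "length (filter P (take j xs)) \<le> length (filter P (take i xs)) + (j - i)" by simp_all
qed

lemma sym_dist_filter_le:
  assumes "i < length xs" "j < length xs" "xs ! i = a" "xs ! j = b" "P a" "P b"
  shows "sym_dist (filter P xs) a b \<le> nat \<bar>int i - int j\<bar>"
proof -
  let ?f = "\<lambda>i. length (filter P (take i xs))"
  have "nat \<bar>int (?f i) - int (?f j)\<bar> \<le> nat \<bar>int i - int j\<bar>"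
    using length_filter_take_mono[of i j P xs] length_filter_take_mono[of j i P xs]
    unfolding nat_abs_diff_le_iff by (cases "i \<le> j") auto
  moreover have "sym_dist (filter P xs) a b \<le> nat \<bar>int (?f i) - int (?f j)\<bar>"
    using assms nth_filter_length_take[of _ xs P] by (intro sym_dist_le) auto
  ultimately show ?thesis by linarith
qed

lemma double_string_filter_less:
  assumes "double_string m xs" "n \<le> m"
  shows "double_string n (filter (\<lambda>c. c < n) xs)"
proof (rule double_stringI)
  fix a assume "a < n"
  then have "count_list (filter (\<lambda>c. c < n) xs) a = count_list xs a"
    by (simp add: count_list_eq_length_filter filter_filter conj_commute cong: conj_cong)
  also have "\<dots> = 2" using assms \<open>a < n\<close> by (intro double_string_count[of m]) auto
  finally show "count_list (filter (\<lambda>c. c < n) xs) a = 2" .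
qed auto

lemma diameter_filter_less_le:
  assumes "double_string m xs" "2 \<le> n" "n \<le> m"
  shows "diameter n (filter (\<lambda>c. c < n) xs) \<le> diameter m xs"
proof (rule diameter_le[OF assms(2)])
  fix a b assume ab: "a < n" "b < n" "a \<noteq> b"
  obtain i j where "i < length xs" "j < length xs" "xs ! i = a" "xs ! j = b"
    using double_string_occurs[OF assms(1), of a] double_string_occurs[OF assms(1), of b] ab assms(3)
    by (metis order_less_le_trans)
  then obtain i' j' where ij: "i' < length xs" "j' < length xs" "xs ! i' = a" "xs ! j' = b"
    and min: "sym_dist xs a b = nat \<bar>int i' - int j'\<bar>"
    by (rule sym_dist_attained)
  have "sym_dist (filter (\<lambda>c. c < n) xs) a b \<le> sym_dist xs a b"
    unfolding min using ij ab by (intro sym_dist_filter_le) auto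
  also have "\<dots> \<le> diameter m xs" using ab assms(3) by (intro sym_dist_le_diameter) auto
  finally show "sym_dist (filter (\<lambda>c. c < n) xs) a b \<le> diameter m xs" .
qed

definition inflate :: "nat \<Rightarrow> nat \<Rightarrow> nat list \<Rightarrow> nat list" where
  "inflate m k xs = map (\<lambda>i. xs ! (i div k) + m * (i mod k)) [0..<length xs * k]"

lemma length_inflate: "length (inflate m k xs) = length xs * k"
  by (simp add: inflate_def)

lemma block_index_less:
  fixes p l c k :: nat
  assumes "p < l" "c < k"
  shows "p * k + c < l * k"
proof -
  have "p * k + c < Suc p * k" using assms(2) by simp
  also have "\<dots> \<le> l * k" using assms(1) by (intro mult_le_mono1) simp
  finally show ?thesis .
qed

lemma nth_inflate:
  assumes "p < length xs" "c < k"
  shows "inflate m k xs ! (p * k + c) = xs ! p + m * c"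
  using assms block_index_less[OF assms] by (simp add: inflate_def)

lemma inflate_occurrences:
  assumes "double_string m xs" "0 < k" "a < m * k"
  shows "{i. i < length (inflate m k xs) \<and> inflate m k xs ! i = a} =
    (\<lambda>p. p * k + a div m) ` {p. p < length xs \<and> xs ! p = a mod m}"
proof -
  have q: "a div m < k" using assms(3) less_mult_imp_div_less[of a k m] by (simp add: mult.commute)
  show ?thesis
  proof (intro set_eqI iffI)
    fix i assume "i \<in> {i. i < length (inflate m k xs) \<and> inflate m k xs ! i = a}"
    then have i: "i < length xs * k" and e: "xs ! (i div k) + m * (i mod k) = a"
      by (auto simp: inflate_def)
    have p: "i div k < length xs" using i less_mult_imp_div_less by blast
    have "xs ! (i div k) < m" using double_string_symbol_less[OF assms(1) p] .
    then have "a mod m = xs ! (i div k)" and "a div m = i mod k" using e by auto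
    then show "i \<in> (\<lambda>p. p * k + a div m) ` {p. p < length xs \<and> xs ! p = a mod m}"
      using p by (auto intro!: image_eqI[of _ _ "i div k"])
  next
    fix i assume "i \<in> (\<lambda>p. p * k + a div m) ` {p. p < length xs \<and> xs ! p = a mod m}"
    then obtain p where "p < length xs" "xs ! p = a mod m" "i = p * k + a div m" by auto
    then show "i \<in> {i. i < length (inflate m k xs) \<and> inflate m k xs ! i = a}"
      using q nth_inflate block_index_less by (simp add: length_inflate)
  qed
qed

lemma double_string_inflate:
  assumes "double_string m xs" "0 < k"
  shows "double_string (m * k) (inflate m k xs)"
proof (rule double_stringI)
  show "set (inflate m k xs) \<subseteq> {..<m * k}"
  proof
    fix a assume "a \<in> set (inflate m k xs)"
    then obtain i where i: "i < length xs * k" and a: "a = xs ! (i div k) + m * (i mod k)"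
      by (auto simp: inflate_def)
    have "xs ! (i div k) < m"
      using double_string_symbol_less[OF assms(1)] i less_mult_imp_div_less by blast
    moreover have "i mod k + 1 \<le> k" using assms(2) by (simp add: Suc_leI)
    then have "m * (i mod k) + m \<le> m * k" by (metis add_mult_distrib2 mult_le_mono2 nat_mult_1_right)
    ultimately show "a \<in> {..<m * k}" using a by simp
  qed
next
  fix a assume a: "a < m * k"
  have "inj_on (\<lambda>p. p * k + a div m) {p. p < length xs \<and> xs ! p = a mod m}"
    using assms(2) by (auto simp: inj_on_def)
  then have "card {i. i < length (inflate m k xs) \<and> inflate m k xs ! i = a} =
      card {p. p < length xs \<and> xs ! p = a mod m}"
    by (simp add: inflate_occurrences[OF assms a] card_image)
  also have "\<dots> = count_list xs (a mod m)" by (rule card_nth_eq_count_list)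
  also have "\<dots> = 2"
    using a by (intro double_string_count[OF assms(1)]) (cases "m = 0"; simp)
  finally show "count_list (inflate m k xs) a = 2" by (simp add: card_nth_eq_count_list)
qed

lemma close_occurrences:
  assumes "double_string m xs" "s < m" "t < m"
  obtains p q where "p < length xs" "q < length xs" "xs ! p = s" "xs ! q = t"
    "nat \<bar>int p - int q\<bar> \<le> diameter m xs"
proof (cases "s = t")
  case True
  obtain p where "p < length xs" "xs ! p = s" using double_string_occurs[OF assms(1,2)] .
  then show ?thesis using that True by fastforce
next
  case False
  obtain p where p: "p < length xs" "xs ! p = s" using double_string_occurs[OF assms(1,2)] .
  obtain q where q: "q < length xs" "xs ! q = t" using double_string_occurs[OF assms(1,3)] .
  obtain p' q' where "p' < length xs" "q' < length xs" "xs ! p' = s" "xs ! q' = t"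
    and "sym_dist xs s t = nat \<bar>int p' - int q'\<bar>"
    using sym_dist_attained[OF p(1) q(1) p(2) q(2)] .
  moreover have "sym_dist xs s t \<le> diameter m xs" using assms False by (intro sym_dist_le_diameter)
  ultimately show ?thesis using that by simp
qed

lemma diameter_inflate_le:
  assumes "double_string m xs" "2 \<le> m" "0 < k"
  shows "diameter (m * k) (inflate m k xs) \<le> (diameter m xs + 1) * k - 1"
proof (rule diameter_le)
  have "m \<le> m * k" using assms(3) by simp
  then show "2 \<le> m * k" using assms(2) by linarith
next
  fix a b assume ab: "a < m * k" "b < m * k" "a \<noteq> b"
  let ?D = "diameter m xs"
  have m: "0 < m" using assms(2) by simp
  have c: "a div m < k" and d: "b div m < k"
    using ab less_mult_imp_div_less[of _ k m] by (simp_all add: mult.commute)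
  obtain p q where pq: "p < length xs" "q < length xs" "xs ! p = a mod m" "xs ! q = b mod m"
    and close: "nat \<bar>int p - int q\<bar> \<le> ?D"
    using close_occurrences[OF assms(1), of "a mod m" "b mod m"] m by auto
  have "sym_dist (inflate m k xs) a b \<le> nat \<bar>int (p * k + a div m) - int (q * k + b div m)\<bar>"
    using pq c d by (intro sym_dist_le) (simp_all add: length_inflate block_index_less nth_inflate)
  also have "\<dots> \<le> (?D + 1) * k - 1"
  proof -
    have "p \<le> q + ?D" "q \<le> p + ?D" using close unfolding nat_abs_diff_le_iff by simp_all
    then have "p * k \<le> q * k + ?D * k" "q * k \<le> p * k + ?D * k"
      using mult_le_mono1 add_mult_distrib by metis+
    then show ?thesis using c d unfolding nat_abs_diff_le_iff add_mult_distrib by linarith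
  qed
  finally show "sym_dist (inflate m k xs) a b \<le> (?D + 1) * k - 1" .
qed

definition base13 :: "nat list" where
  "base13 = [3, 6, 12, 9, 1, 8, 2, 7, 5, 4, 0, 12, 6, 11, 7, 10, 2, 8, 3, 5, 11, 0, 4, 9, 1, 10]"

lemma double_string_base13: "double_string 13 base13"
proof (rule double_stringI)
  show "set base13 \<subseteq> {..<13}" by (simp add: base13_def)
  have "\<forall>a\<in>set [0..<13]. count_list base13 a = 2" unfolding base13_def by code_simp
  then show "count_list base13 a = 2" if "a < 13" for a using that by simp
qed

lemma length_base13: "length base13 = 26"
  by (simp add: base13_def)

lemma base13_close_occurrences:
  assumes "a < 13" "b < 13" "a \<noteq> b"
  shows "\<exists>i<26. \<exists>j<26. base13 ! i = a \<and> base13 ! j = b \<and> i \<le> j + 4 \<and> j \<le> i + 4"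
proof -
  have "\<forall>a\<in>set [0..<13]. \<forall>b\<in>set [0..<13]. a \<noteq> b \<longrightarrow>
    (\<exists>i\<in>set [0..<26]. \<exists>j\<in>set [0..<26]. base13 ! i = a \<and> base13 ! j = b \<and> i \<le> j + 4 \<and> j \<le> i + 4)"
    unfolding base13_def by code_simp
  then show ?thesis using assms by (simp only: set_upt atLeastLessThan_iff Bex_def) auto
qed

lemma diameter_base13: "diameter 13 base13 \<le> 4"
proof (rule diameter_le)
  fix a b :: nat assume "a < 13" "b < 13" "a \<noteq> b"
  then obtain i j where "i < 26" "j < 26" "base13 ! i = a" "base13 ! j = b" "i \<le> j + 4" "j \<le> i + 4"
    using base13_close_occurrences by blast
  then show "sym_dist base13 a b \<le> 4"
    using sym_dist_le[of i base13 j a b] unfolding nat_abs_diff_le_iff length_base13 by simp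
qed simp

lemma exists_double_string_diameter_le:
  assumes "2 \<le> n"
  shows "\<exists>xs. double_string n xs \<and> diameter n xs \<le> 5 * ((n + 12) div 13) - 1"
proof -
  define k where "k = (n + 12) div 13"
  have "0 < k" "n \<le> 13 * k" using assms unfolding k_def by simp_all
  define ys where "ys = inflate 13 k base13"
  have ys: "double_string (13 * k) ys"
    unfolding ys_def using double_string_inflate[OF double_string_base13 \<open>0 < k\<close>] .
  have "(diameter 13 base13 + 1) * k \<le> 5 * k"
    using diameter_base13 by (intro mult_le_mono1) simp
  then have "diameter (13 * k) ys \<le> 5 * k - 1"
    using diameter_inflate_le[OF double_string_base13 _ \<open>0 < k\<close>] unfolding ys_def by linarith
  then have "double_string n (filter (\<lambda>c. c < n) ys) \<and> diameter n (filter (\<lambda>c. c < n) ys) \<le> 5 * k - 1"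
    using double_string_filter_less[OF ys] diameter_filter_less_le[OF ys assms] \<open>n \<le> 13 * k\<close>
    by (meson order_trans)
  then show ?thesis unfolding k_def by blast
qed

lemma ceiling_div_13: "\<lceil>real n / 13\<rceil> = int ((n + 12) div 13)"
proof -
  have "real n \<le> 13 * real ((n + 12) div 13)" "13 * real ((n + 12) div 13) < real n + 13"
    by linarith+
  then show ?thesis by (simp add: ceiling_eq_iff)
qed

lemma limsup_le_of_eventually_le_plus_div:
  assumes "eventually (\<lambda>n. f n \<le> c + C / real n) sequentially"
  shows "limsup (\<lambda>n. ereal (f n)) \<le> ereal c"
proof -
  have "(\<lambda>n. ereal (c + C / real n)) \<longlonglongrightarrow> ereal (c + 0)"
    by (intro tendsto_ereal tendsto_add tendsto_const lim_const_over_n)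
  then have "limsup (\<lambda>n. ereal (c + C / real n)) = ereal c"
    by (intro lim_imp_Limsup) simp_all
  moreover have "limsup (\<lambda>n. ereal (f n)) \<le> limsup (\<lambda>n. ereal (c + C / real n))"
    using assms by (intro Limsup_mono) (simp add: eventually_mono)
  ultimately show ?thesis by simp
qed

theorem theorem3p7:
  shows "(\<forall>n::nat. n \<ge> 2 \<longrightarrow> (\<exists>xs. double_string n xs \<and>
            real (diameter n xs) \<le> 5 * real_of_int \<lceil>real n / 13\<rceil> - 1))
       \<and> (\<forall>n::nat. n \<ge> 2 \<longrightarrow> real (delta n) \<le> 5 * real_of_int \<lceil>real n / 13\<rceil> - 1)
       \<and> limsup (\<lambda>n. ereal (real (delta n) / real n)) \<le> ereal (5 / 13)"
proof -
  have construction: "\<exists>xs. double_string n xs \<and> real (diameter n xs) \<le> 5 * real_of_int \<lceil>real n / 13\<rceil> - 1"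
    if n: "2 \<le> n" for n
  proof -
    obtain xs where "double_string n xs" "diameter n xs \<le> 5 * ((n + 12) div 13) - 1"
      using exists_double_string_diameter_le[OF n] by blast
    moreover have "0 < (n + 12) div 13" using n by simp
    ultimately show ?thesis unfolding ceiling_div_13 by (intro exI[of _ xs]) (simp add: of_nat_diff)
  qed
  have delta_bound: "real (delta n) \<le> 5 * real_of_int \<lceil>real n / 13\<rceil> - 1" if "2 \<le> n" for n
    using construction[OF that] delta_le_diameter by (meson of_nat_le_iff order_trans)
  have "limsup (\<lambda>n. ereal (real (delta n) / real n)) \<le> ereal (5 / 13)"
  proof (rule limsup_le_of_eventually_le_plus_div[where C = 4], unfold eventually_sequentially, intro exI allI impI)
    fix n :: nat assume "2 \<le> n"
    then have "real (delta n) \<le> 5 / 13 * real n + 4"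
      using delta_bound[of n] of_int_ceiling_le_add_one[of "real n / 13"] by linarith
    then show "real (delta n) / real n \<le> 5 / 13 + 4 / real n"
      using \<open>2 \<le> n\<close> by (simp add: field_simps)
  qed
  then show ?thesis using construction delta_bound by blast
qed

end
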